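(* Consider the master–worker Markov chain described in the context, where in this lemma the master's auditing probability is allowed to take the value $0$. Let $Z\subseteq W$ be any set of workers such that $WB_Y > a_i$ for every rational worker $i\in Z$. Let $$S=\{\, s \;:\; p_A(s)=0,\ \ p_{Cw}(s)=1 \text{ for all } w\in Z,\ \ \rho_Z(s) > \rho_{W\setminus Z}(s)\,\}.$$ Then: (i) $S$ is a closed untruthful set; and (ii) if $p_A(0)=0$, $\rho_Z(0)>\rho_{W\setminus Z}(0)$, and $p_{Ci}(0)>0$ for all $i\in Z$, then $S$ is reachable (the chain reaches some state of $S$ with positive probability).
   Context: A master interacts in rounds $r=1,2,\dots$ with a set $W$ of $n$ workers; in each round every worker returns an answer to a task with a unique correct result. A worker is honest in a round if it returns the correct result and cheats otherwise; all workers that cheat in a round return the same incorrect value. Each worker has a fixed type: altruistic (always honest, cheating probability constantly $0$), malicious (always cheats, cheating probability constantly $1$), or rational (cheating probability $p_{Ci}$ evolves as below). Nonnegative parameters: $WB_Y$ (reward), $WP_C$ (punishment for being caught cheating), $WC_T$ (cost of computing the task), an aspiration $a_i$ of each worker $i$, learning rates $\alpha_m,\alpha_w>0$, a tolerance $\tau$, and a lower bound $p_A^{min}$ on the auditing probability. Reputation: $aud(r)$ is the number of rounds among $1,\dots,r$ in which the master audited, and $v_i(r)$ the number of those audited rounds in which worker $i$ was honest. The reputation $\rho_i(r)$ of worker $i$ after round $r$ is computed by a fixed reputation scheme from the audit outcomes and changes only in rounds in which the master audits. For $Y\subseteq W$, $\rho_Y(r)=\sum_{i\in Y}\rho_i(r)$.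 Markov chain: the state is $s=\langle p_A(s), aud(s), p_{C1}(s),\dots,p_{Cn}(s), v_1(s),\dots,v_n(s)\rangle$; $s_r$ is the state at the end of round $r$ and $x(r)$ denotes component $x$ of $s_r$. In round $r$, the set of cheaters is exactly $F\subseteq W$ with probability $P_F(r)=\prod_{j\in F}p_{Cj}(r-1)\prod_{k\notin F}(1-p_{Ck}(r-1))$ (independent decisions). Then: - With probability $p_A(r-1)$ the master audits: $aud(r)=aud(r-1)+1$; $v_i(r)=v_i(r-1)+1$ for $i\notin F$ and $v_i(r)=v_i(r-1)$ for $i\in F$; reputations are updated; $p_A(r)=\min\{1,\max\{p_A^{min}, p_A(r-1)+\alpha_m(\rho_F(r)/\rho_W(r)-\tau)\}\}$; each rational $i\in F$ gets $p_{Ci}(r)=p_{Ci}(r-1)-\alpha_w(a_i+WP_C)$; each rational $i\notin F$ gets $p_{Ci}(r)=p_{Ci}(r-1)+\alpha_w(a_i-(WB_Y-WC_T))$. - With probability $1-p_A(r-1)$ the master does not audit: $p_A$, $aud$, all $v_i$ and all reputations are unchanged; the master accepts the answer of $F$ if $\rho_F(r)>\rho_{W\setminus F}(r)$, the answer of $W\setminus F$ if $\rho_F(r)<\rho_{W\setminus F}(r)$, and chooses one of the two by a fair coin flip in case of a tie. Each rational $i\in F$ gets $p_{Ci}(r)=p_{Ci}(r-1)+\alpha_w(WB_Y-a_i)$ if $F$'s answer was accepted and $p_{Ci}(r)=p_{Ci}(r-1)-\alpha_w a_i$ otherwise; each rational $i\notin F$ gets $p_{Ci}(r)=p_{Ci}(r-1)+\alpha_w(a_i+WC_T)$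 if $F$'s answer was accepted and $p_{Ci}(r)=p_{Ci}(r-1)+\alpha_w(a_i-(WB_Y-WC_T))$ otherwise. All cheating probabilities are clipped to $[0,1]$. The initial state $s_0$ is arbitrary subject to $p_A(0)\in[p_A^{min},1]$ and $p_{Ci}(0)\in[0,1]$. Terminology: in a state, a set $X\subseteq W$ is reputable if $\rho_X>\rho_{W\setminus X}$. A worker $i$ is a cheater in state $s$ if $p_{Ci}(s)=1$ and honest if $p_{Ci}(s)=0$. A state is untruthful if the set of cheater workers in it is reputable, and truthful if the set of honest workers in it is reputable; an untruthful (resp. truthful) set is a set of untruthful (resp. truthful) states. A set of states $S$ is closed if once the chain is in a state of $S$ it never moves to a state outside $S$. *)

theory Defs
  imports "HOL-Probability.Probability"
begin

datatype wtype = Altruistic | Malicious | Rational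

record 'w params =
  WBY   :: real
  WPC   :: real
  WCT   :: real
  asp   :: "'w \<Rightarrow> real"
  alpha_m :: real
  alpha_w :: real
  tau   :: real
  pAmin :: real

text \<open>Chain state: auditing probability, number of audits, cheating probabilities,
  number of audited rounds in which each worker was honest.\<close>
record 'w state =
  pA  :: real
  aud :: nat
  pC  :: "'w \<Rightarrow> real"
  v   :: "'w \<Rightarrow> nat"

definition rho :: "(nat \<Rightarrow> nat \<Rightarrow> real) \<Rightarrow> 'w state \<Rightarrow> 'w \<Rightarrow> real" where
  "rho rep s i = rep (aud s) (v s i)"

definition rhoSet :: "(nat \<Rightarrow> nat \<Rightarrow> real) \<Rightarrow> 'w state \<Rightarrow> 'w set \<Rightarrow> real" where
  "rhoSet rep s Y = (\<Sum>i\<in>Y. rho rep s i)"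

definition clip01 :: "real \<Rightarrow> real" where
  "clip01 x = min 1 (max 0 x)"

definition audit_update ::
  "'w params \<Rightarrow> 'w set \<Rightarrow> ('w \<Rightarrow> wtype) \<Rightarrow> (nat \<Rightarrow> nat \<Rightarrow> real)
     \<Rightarrow> 'w set \<Rightarrow> 'w state \<Rightarrow> 'w state" where
  "audit_update P W ty rep F s =
    (let s1 = s\<lparr> aud := Suc (aud s),
                 v := (\<lambda>i. if i \<in> F then v s i else Suc (v s i)) \<rparr>
     in s1\<lparr> pA := min 1 (max (pAmin P)
                  (pA s + alpha_m P * (rhoSet rep s1 F / rhoSet rep s1 W - tau P))),
            pC := (\<lambda>i. if ty i = Rational then
                      clip01 (if i \<in> F then pC s i - alpha_w P * (asp P i + WPC P)
                              else pC s i + alpha_w P * (asp P i - (WBY P - WCT P)))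
                    else pC s i) \<rparr>)"

text \<open>State after a non-audited round with cheater set F; acc says whether
  the answer of F was accepted.\<close>
definition noaudit_update ::
  "'w params \<Rightarrow> ('w \<Rightarrow> wtype) \<Rightarrow> 'w set \<Rightarrow> bool \<Rightarrow> 'w state \<Rightarrow> 'w state" where
  "noaudit_update P ty F acc s =
    s\<lparr> pC := (\<lambda>i. if ty i = Rational then
                  clip01 (if i \<in> F then
                            (if acc then pC s i + alpha_w P * (WBY P - asp P i)
                             else pC s i - alpha_w P * asp P i)
                          else
                            (if acc then pC s i + alpha_w P * (asp P i + WCT P)
                             else pC s i + alpha_w P * (asp P i - (WBY P - WCT P))))
                else pC s i) \<rparr>"

definition step ::
  "'w params \<Rightarrow> 'w set \<Rightarrow> ('w \<Rightarrow> wtype) \<Rightarrow> (nat \<Rightarrow> nat \<Rightarrow> real)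
     \<Rightarrow> 'w state \<Rightarrow> 'w state pmf" where
  "step P W ty rep s =
    bind_pmf (Pi_pmf W False (\<lambda>i. bernoulli_pmf (pC s i))) (\<lambda>f.
      let F = {i \<in> W. f i} in
      bind_pmf (bernoulli_pmf (pA s)) (\<lambda>audit.
        if audit then return_pmf (audit_update P W ty rep F s)
        else bind_pmf (bernoulli_pmf (1/2)) (\<lambda>coin.
          let acc = (if rhoSet rep s F > rhoSet rep s (W - F) then True
                     else if rhoSet rep s F < rhoSet rep s (W - F) then False
                     else coin)
          in return_pmf (noaudit_update P ty F acc s))))"

definition steps ::
  "'w params \<Rightarrow> 'w set \<Rightarrow> ('w \<Rightarrow> wtype) \<Rightarrow> (nat \<Rightarrow> nat \<Rightarrow> real)
     \<Rightarrow> nat \<Rightarrow> 'w state \<Rightarrow> 'w state pmf" where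
  "steps P W ty rep n s0 = ((\<lambda>D. bind_pmf D (step P W ty rep)) ^^ n) (return_pmf s0)"

definition closed_set ::
  "'w params \<Rightarrow> 'w set \<Rightarrow> ('w \<Rightarrow> wtype) \<Rightarrow> (nat \<Rightarrow> nat \<Rightarrow> real)
     \<Rightarrow> 'w state set \<Rightarrow> bool" where
  "closed_set P W ty rep S \<longleftrightarrow> (\<forall>s\<in>S. set_pmf (step P W ty rep s) \<subseteq> S)"

definition reputable :: "'w set \<Rightarrow> (nat \<Rightarrow> nat \<Rightarrow> real) \<Rightarrow> 'w state \<Rightarrow> 'w set \<Rightarrow> bool" where
  "reputable W rep s X \<longleftrightarrow> rhoSet rep s X > rhoSet rep s (W - X)"

definition cheaters :: "'w set \<Rightarrow> 'w state \<Rightarrow> 'w set" where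
  "cheaters W s = {i \<in> W. pC s i = 1}"

definition untruthful :: "'w set \<Rightarrow> (nat \<Rightarrow> nat \<Rightarrow> real) \<Rightarrow> 'w state \<Rightarrow> bool" where
  "untruthful W rep s \<longleftrightarrow> reputable W rep s (cheaters W s)"

definition untruthful_set :: "'w set \<Rightarrow> (nat \<Rightarrow> nat \<Rightarrow> real) \<Rightarrow> 'w state set \<Rightarrow> bool" where
  "untruthful_set W rep S \<longleftrightarrow> (\<forall>s\<in>S. untruthful W rep s)"

definition reachable ::
  "'w params \<Rightarrow> 'w set \<Rightarrow> ('w \<Rightarrow> wtype) \<Rightarrow> (nat \<Rightarrow> nat \<Rightarrow> real)
     \<Rightarrow> 'w state \<Rightarrow> 'w state set \<Rightarrow> bool" where
  "reachable P W ty rep s0 S \<longleftrightarrow> (\<exists>n. measure_pmf.prob (steps P W ty rep n s0) S > 0)"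

definition valid_init :: "'w params \<Rightarrow> 'w set \<Rightarrow> ('w \<Rightarrow> wtype) \<Rightarrow> 'w state \<Rightarrow> bool" where
  "valid_init P W ty s \<longleftrightarrow> pAmin P \<le> pA s \<and> pA s \<le> 1 \<and>
     (\<forall>i\<in>W. 0 \<le> pC s i \<and> pC s i \<le> 1 \<and>
        (ty i = Altruistic \<longrightarrow> pC s i = 0) \<and> (ty i = Malicious \<longrightarrow> pC s i = 1))"

definition valid_params :: "'w params \<Rightarrow> 'w set \<Rightarrow> bool" where
  "valid_params P W \<longleftrightarrow> 0 \<le> WBY P \<and> 0 \<le> WPC P \<and> 0 \<le> WCT P \<and> (\<forall>i\<in>W. 0 \<le> asp P i)
     \<and> 0 < alpha_m P \<and> 0 < alpha_w P \<and> 0 \<le> tau P \<and> 0 \<le> pAmin P"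

end

theory Submission
  imports Defs
begin

text \<open>With pA = 0 the master never audits, so reputations are frozen and the answer of a
  reputable set is always accepted. If Z is reputable and all of Z cheats, every cheater set
  contains Z, is reputable, and is accepted; each rational member of Z is then rewarded by
  alpha_w (WB_Y - a_i) \<ge> 0 and keeps cheating, so the set is closed. For reachability, follow
  the path on which exactly the workers with positive cheating probability cheat: Z stays among
  the accepted cheaters, and the cheating probability of each rational i in Z grows by
  alpha_w (WB_Y - a_i) > 0 per round until it is clipped at 1.\<close>

lemma in_set_pmf_bernoulli_pmf_iff:
  assumes "0 \<le> p" "p \<le> 1"
  shows "b \<in> set_pmf (bernoulli_pmf p) \<longleftrightarrow> (if b then 0 < p else p < 1)"
  using assms by (cases b) (auto simp: set_pmf_iff)

lemma set_pmf_bernoulli_pmf_0 [simp]: "set_pmf (bernoulli_pmf 0) = {False}"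
  by (auto simp: in_set_pmf_bernoulli_pmf_iff)

lemma set_pmf_bernoulli_pmf_1 [simp]: "set_pmf (bernoulli_pmf 1) = {True}"
  by (auto simp: in_set_pmf_bernoulli_pmf_iff split: if_splits)

lemma pA_noaudit_update [simp]: "pA (noaudit_update P ty F acc s) = pA s"
  by (simp add: noaudit_update_def)

lemma rhoSet_noaudit_update [simp]: "rhoSet rep (noaudit_update P ty F acc s) X = rhoSet rep s X"
  by (simp add: rhoSet_def rho_def noaudit_update_def)

lemma reputable_noaudit_update [simp]:
  "reputable W rep (noaudit_update P ty F acc s) X \<longleftrightarrow> reputable W rep s X"
  by (simp add: reputable_def)

lemma pC_noaudit_update_not_rational [simp]:
  "ty i \<noteq> Rational \<Longrightarrow> pC (noaudit_update P ty F acc s) i = pC s i"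
  by (simp add: noaudit_update_def)

lemma pC_noaudit_update_bounds:
  assumes "0 \<le> pC s i" "pC s i \<le> 1"
  shows "0 \<le> pC (noaudit_update P ty F acc s) i" "pC (noaudit_update P ty F acc s) i \<le> 1"
  using assms by (simp_all add: noaudit_update_def clip01_def)

lemma pC_noaudit_update_accepted_ge:
  assumes "i \<in> F" "ty i = Rational" "d \<le> alpha_w P * (WBY P - asp P i)"
  shows "min 1 (pC s i + d) \<le> pC (noaudit_update P ty F True s) i"
  using assms by (auto simp: noaudit_update_def clip01_def)

lemma min_one_add_mono:
  fixes a b d :: real
  assumes "min 1 a \<le> b" "0 \<le> d"
  shows "min 1 (a + d) \<le> min 1 (b + d)"
  using assms by (auto simp: min_def split: if_splits)

lemma reputable_superset:
  assumes "finite W" "\<And>k m. 0 \<le> rep k m" "Z \<subseteq> F" "F \<subseteq> W" "reputable W rep s Z"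
  shows "reputable W rep s F"
proof -
  have "rhoSet rep s Z \<le> rhoSet rep s F" "rhoSet rep s (W - F) \<le> rhoSet rep s (W - Z)"
    unfolding rhoSet_def rho_def using assms(1-4)
    by (auto intro!: sum_mono2 intro: finite_subset)
  with assms(5) show ?thesis
    unfolding reputable_def by linarith
qed

lemma set_pmf_step_without_audit:
  assumes "finite W" "pA s = 0" "s' \<in> set_pmf (step P W ty rep s)"
  obtains F acc where "F \<subseteq> W" "cheaters W s \<subseteq> F" "reputable W rep s F \<Longrightarrow> acc"
    "s' = noaudit_update P ty F acc s"
proof -
  obtain f coin where f: "f \<in> PiE_dflt W False (set_pmf \<circ> (\<lambda>i. bernoulli_pmf (pC s i)))"
    and s': "s' = noaudit_update P ty {i \<in> W. f i}
      (if rhoSet rep s {i \<in> W. f i} > rhoSet rep s (W - {i \<in> W. f i}) then True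
       else if rhoSet rep s {i \<in> W. f i} < rhoSet rep s (W - {i \<in> W. f i}) then False
       else coin) s"
    using assms(3) unfolding step_def set_bind_pmf set_Pi_pmf[OF assms(1)] assms(2)
      set_pmf_bernoulli_pmf_0 Let_def
    by (simp only: UN_insert UN_empty if_False set_bind_pmf set_return_pmf Un_empty_right) blast
  have "cheaters W s \<subseteq> {i \<in> W. f i}"
    using f by (auto simp: cheaters_def PiE_dflt_def)
  from that[OF _ this _ s'] show thesis
    by (auto simp: reputable_def)
qed

lemma noaudit_update_accepted_in_step:
  assumes "finite W" "pA s = 0" "F \<subseteq> W" "\<forall>i\<in>W. 0 \<le> pC s i \<and> pC s i \<le> 1"
    "\<forall>i\<in>F. 0 < pC s i" "\<forall>i\<in>W - F. pC s i < 1" "reputable W rep s F"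
  shows "noaudit_update P ty F True s \<in> set_pmf (step P W ty rep s)"
proof -
  have "(\<lambda>i. i \<in> F) \<in> PiE_dflt W False (\<lambda>i. set_pmf (bernoulli_pmf (pC s i)))"
    using assms(3-6) by (auto simp: PiE_dflt_def in_set_pmf_bernoulli_pmf_iff)
  moreover have "{i \<in> W. i \<in> F} = F"
    using assms(3) by blast
  moreover have "True \<in> set_pmf (bernoulli_pmf (1/2))"
    by (simp add: in_set_pmf_bernoulli_pmf_iff)
  ultimately show ?thesis
    using assms(7) unfolding step_def set_bind_pmf set_Pi_pmf[OF assms(1)] reputable_def
    by (intro UN_I[of "\<lambda>i. i \<in> F"]) (auto simp: assms(2) o_def Let_def)
qed

lemma steps_Suc_in_set_pmf:
  assumes "s \<in> set_pmf (steps P W ty rep n s0)" "s' \<in> set_pmf (step P W ty rep s)"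
  shows "s' \<in> set_pmf (steps P W ty rep (Suc n) s0)"
  using assms by (auto simp: steps_def)

definition coalition_states :: "(nat \<Rightarrow> nat \<Rightarrow> real) \<Rightarrow> 'w set \<Rightarrow> 'w set \<Rightarrow> 'w state set" where
  "coalition_states rep W Z = {s. pA s = 0 \<and> (\<forall>w\<in>Z. pC s w = 1) \<and> reputable W rep s Z}"

lemma untruthful_set_coalition_states:
  assumes "finite W" "\<And>k m. 0 \<le> rep k m" "Z \<subseteq> W"
  shows "untruthful_set W rep (coalition_states rep W Z)"
  unfolding untruthful_set_def untruthful_def
proof
  fix s assume "s \<in> coalition_states rep W Z"
  then have "Z \<subseteq> cheaters W s" "reputable W rep s Z"
    using assms(3) by (auto simp: coalition_states_def cheaters_def)
  then show "reputable W rep s (cheaters W s)"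
    using reputable_superset[OF assms(1,2)] by (auto simp: cheaters_def)
qed

lemma closed_set_coalition_states:
  assumes "finite W" "\<And>k m. 0 \<le> rep k m" "Z \<subseteq> W" "0 \<le> alpha_w P"
    "\<And>i. i \<in> Z \<Longrightarrow> ty i = Rational \<Longrightarrow> asp P i \<le> WBY P"
  shows "closed_set P W ty rep (coalition_states rep W Z)"
  unfolding closed_set_def
proof (intro ballI subsetI)
  fix s s' assume s: "s \<in> coalition_states rep W Z" and s': "s' \<in> set_pmf (step P W ty rep s)"
  then have Z_cheat: "\<forall>w\<in>Z. pC s w = 1" and "pA s = 0" "reputable W rep s Z"
    by (auto simp: coalition_states_def)
  then obtain F acc where F: "F \<subseteq> W" "cheaters W s \<subseteq> F" "reputable W rep s F \<Longrightarrow> acc"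
    and s'_eq: "s' = noaudit_update P ty F acc s"
    using set_pmf_step_without_audit[OF assms(1) _ s'] by metis
  have "Z \<subseteq> F"
    using F(2) Z_cheat assms(3) by (auto simp: cheaters_def)
  then have accepted: "s' = noaudit_update P ty F True s"
    using reputable_superset[OF assms(1,2) _ F(1) \<open>reputable W rep s Z\<close>] F(3) s'_eq by simp
  have "pC s' w = 1" if "w \<in> Z" for w
  proof (cases "ty w = Rational")
    case True
    have "w \<in> F"
      using \<open>Z \<subseteq> F\<close> that by blast
    moreover note True
    moreover have "0 \<le> alpha_w P * (WBY P - asp P w)"
      using assms(4,5) that True by simp
    ultimately have "min 1 (pC s w + 0) \<le> pC s' w"
      unfolding accepted by (rule pC_noaudit_update_accepted_ge)
    then show ?thesis
      using pC_noaudit_update_bounds(2)[of s w] Z_cheat that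
      by (simp add: accepted antisym)
  qed (use Z_cheat that accepted in simp)
  with s show "s' \<in> coalition_states rep W Z"
    by (simp add: coalition_states_def accepted)
qed

lemma step_accepting_positive_workers:
  assumes "finite W" "\<And>k m. 0 \<le> rep k m" "Z \<subseteq> W" "pA s = 0"
    "\<forall>i\<in>W. 0 \<le> pC s i \<and> pC s i \<le> 1" "\<forall>i\<in>Z. 0 < pC s i" "reputable W rep s Z"
  shows "noaudit_update P ty {i \<in> W. 0 < pC s i} True s \<in> set_pmf (step P W ty rep s)"
proof (rule noaudit_update_accepted_in_step[OF assms(1,4) _ assms(5)])
  have "Z \<subseteq> {i \<in> W. 0 < pC s i}"
    using assms(3,6) by blast
  then show "reputable W rep s {i \<in> W. 0 < pC s i}"
    by (rule reputable_superset[OF assms(1,2) _ _ assms(7)]) blast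
  show "\<forall>i\<in>W - {i \<in> W. 0 < pC s i}. pC s i < 1"
    using assms(5) by force
qed simp_all

lemma accepting_path:
  assumes "finite W" "\<And>k m. 0 \<le> rep k m" "Z \<subseteq> W" "0 \<le> alpha_w P"
    "\<And>i. i \<in> Z \<Longrightarrow> ty i = Rational \<Longrightarrow> asp P i \<le> WBY P"
    "pA s0 = 0" "reputable W rep s0 Z" "\<forall>i\<in>W. 0 \<le> pC s0 i \<and> pC s0 i \<le> 1"
    "\<forall>i\<in>Z. 0 < pC s0 i"
  shows "\<exists>s\<in>set_pmf (steps P W ty rep n s0). pA s = 0 \<and> reputable W rep s Z \<and>
    (\<forall>i\<in>W. 0 \<le> pC s i \<and> pC s i \<le> 1) \<and>
    (\<forall>i\<in>Z. if ty i = Rational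
      then min 1 (pC s0 i + real n * (alpha_w P * (WBY P - asp P i))) \<le> pC s i
      else pC s i = pC s0 i)"
proof (induction n)
  case 0
  show ?case
    using assms(6-8) by (auto simp: steps_def)
next
  case (Suc n)
  define \<delta> where "\<delta> i = alpha_w P * (WBY P - asp P i)" for i
  have \<delta>_nonneg: "0 \<le> \<delta> i" if "i \<in> Z" "ty i = Rational" for i
    using assms(4) assms(5)[OF that] by (simp add: \<delta>_def)
  obtain s where s: "s \<in> set_pmf (steps P W ty rep n s0)" "pA s = 0" "reputable W rep s Z"
    and bounds: "\<forall>i\<in>W. 0 \<le> pC s i \<and> pC s i \<le> 1"
    and grown: "\<forall>i\<in>Z. if ty i = Rational then min 1 (pC s0 i + real n * \<delta> i) \<le> pC s i
                           else pC s i = pC s0 i"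
    using Suc.IH unfolding \<delta>_def by blast
  have pos: "\<forall>i\<in>Z. 0 < pC s i"
  proof
    fix i assume i: "i \<in> Z"
    show "0 < pC s i"
    proof (cases "ty i = Rational")
      case True
      then have "min 1 (pC s0 i + real n * \<delta> i) \<le> pC s i"
        using grown i by auto
      moreover have "0 < min 1 (pC s0 i + real n * \<delta> i)"
        using assms(9) i \<delta>_nonneg[OF i True] by (simp add: add_pos_nonneg)
      ultimately show ?thesis
        by linarith
    qed (use grown i assms(9) in auto)
  qed
  define s' where "s' = noaudit_update P ty {i \<in> W. 0 < pC s i} True s"
  have "s' \<in> set_pmf (steps P W ty rep (Suc n) s0)"
    unfolding s'_def using s bounds pos
    by (intro steps_Suc_in_set_pmf[OF s(1)] step_accepting_positive_workers[OF assms(1-3)])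
  moreover have "0 \<le> pC s' i \<and> pC s' i \<le> 1" if "i \<in> W" for i
    using bounds that unfolding s'_def by (auto intro: pC_noaudit_update_bounds)
  moreover have "min 1 (pC s0 i + real (Suc n) * \<delta> i) \<le> pC s' i"
    if "i \<in> Z" "ty i = Rational" for i
  proof -
    have "min 1 (pC s0 i + real n * \<delta> i) \<le> pC s i"
      using grown that by auto
    then have "min 1 ((pC s0 i + real n * \<delta> i) + \<delta> i) \<le> min 1 (pC s i + \<delta> i)"
      using \<delta>_nonneg[OF that] by (rule min_one_add_mono)
    also have "\<dots> \<le> pC s' i"
      unfolding s'_def using that pos assms(3)
      by (intro pC_noaudit_update_accepted_ge) (auto simp: \<delta>_def)
    finally show ?thesis
      by (simp add: algebra_simps)
  qed
  moreover have "pC s' i = pC s0 i" if "i \<in> Z" "ty i \<noteq> Rational" for i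
    using grown that by (simp add: s'_def)
  moreover have "pA s' = 0" "reputable W rep s' Z"
    using s by (simp_all add: s'_def)
  ultimately show ?case
    unfolding \<delta>_def[symmetric] by (intro bexI[of _ s']) auto
qed

lemma coalition_states_reachable:
  assumes "finite W" "\<And>k m. 0 \<le> rep k m" "Z \<subseteq> W" "0 < alpha_w P"
    "\<And>i. i \<in> Z \<Longrightarrow> ty i = Rational \<Longrightarrow> asp P i < WBY P"
    "valid_init P W ty s0" "pA s0 = 0" "reputable W rep s0 Z" "\<forall>i\<in>Z. 0 < pC s0 i"
  shows "reachable P W ty rep s0 (coalition_states rep W Z)"
proof -
  define \<delta> where "\<delta> i = alpha_w P * (WBY P - asp P i)" for i
  have finite_rational: "finite {i \<in> Z. ty i = Rational}"
    using assms(1,3) by (auto intro: finite_subset)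
  have "\<forall>\<^sub>F n in sequentially. \<forall>i\<in>{i \<in> Z. ty i = Rational}. 1 \<le> real n * \<delta> i"
    unfolding eventually_ball_finite_distrib[OF finite_rational]
  proof
    fix i assume "i \<in> {i \<in> Z. ty i = Rational}"
    then have "0 < \<delta> i"
      using assms(4,5) by (simp add: \<delta>_def)
    then obtain N where N: "1 < real N * \<delta> i"
      using ex_less_of_nat_mult by blast
    show "\<forall>\<^sub>F n in sequentially. 1 \<le> real n * \<delta> i"
    proof (rule eventually_sequentiallyI)
      fix m assume "N \<le> m"
      then have "real N * \<delta> i \<le> real m * \<delta> i"
        using \<open>0 < \<delta> i\<close> by (simp add: mult_right_mono)
      with N show "1 \<le> real m * \<delta> i"
        by linarith
    qed
  qed
  then obtain n where n: "\<And>i. i \<in> Z \<Longrightarrow> ty i = Rational \<Longrightarrow> 1 \<le> real n * \<delta> i"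
    unfolding eventually_sequentially by blast
  have "\<forall>i\<in>W. 0 \<le> pC s0 i \<and> pC s0 i \<le> 1"
    using assms(6) by (simp add: valid_init_def)
  then obtain s where s: "s \<in> set_pmf (steps P W ty rep n s0)" "pA s = 0" "reputable W rep s Z"
    and bounds: "\<forall>i\<in>W. 0 \<le> pC s i \<and> pC s i \<le> 1"
    and grown: "\<forall>i\<in>Z. if ty i = Rational then min 1 (pC s0 i + real n * \<delta> i) \<le> pC s i
                        else pC s i = pC s0 i"
    using accepting_path[OF assms(1-3) less_imp_le[OF assms(4)] less_imp_le[OF assms(5)] assms(7,8) _ assms(9)]
    unfolding \<delta>_def by blast
  have "pC s i = 1" if "i \<in> Z" for i
  proof (cases "ty i")
    case Rational
    have "0 < pC s0 i"
      using assms(9) that by blast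
    with n[OF that Rational] have "1 \<le> pC s0 i + real n * \<delta> i"
      by linarith
    then show ?thesis
      using grown bounds that assms(3) Rational by fastforce
  next
    case Malicious
    then show ?thesis
      using grown assms(3,6) that by (auto simp: valid_init_def)
  next
    case Altruistic
    then have "pC s0 i = 0"
      using assms(3,6) that by (auto simp: valid_init_def)
    with assms(9) that show ?thesis
      by auto
  qed
  with s have "s \<in> coalition_states rep W Z"
    by (simp add: coalition_states_def)
  with s(1) show ?thesis
    unfolding reachable_def by (blast intro: measure_pmf_posI)
qed

theorem lemma1:
  fixes P :: "'w params" and W Z :: "'w set" and ty :: "'w \<Rightarrow> wtype"
    and rep :: "nat \<Rightarrow> nat \<Rightarrow> real" and S :: "'w state set"
  assumes "finite W" and "valid_params P W" and "pAmin P = 0"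
    and "\<And>k m. 0 \<le> rep k m"
    and "Z \<subseteq> W"
    and "\<And>i. i \<in> Z \<Longrightarrow> ty i = Rational \<Longrightarrow> WBY P > asp P i"
    and "S = {s. pA s = 0 \<and> (\<forall>w\<in>Z. pC s w = 1) \<and> rhoSet rep s Z > rhoSet rep s (W - Z)}"
  shows "(closed_set P W ty rep S \<and> untruthful_set W rep S) \<and>
         (\<forall>s0. valid_init P W ty s0 \<and> pA s0 = 0 \<and> rhoSet rep s0 Z > rhoSet rep s0 (W - Z)
               \<and> (\<forall>i\<in>Z. pC s0 i > 0) \<longrightarrow> reachable P W ty rep s0 S)"
proof -
  have alpha_w_pos: "0 < alpha_w P"
    using assms(2) by (simp add: valid_params_def)
  have S_eq: "S = coalition_states rep W Z"
    using assms(7) by (simp add: coalition_states_def reputable_def)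
  have "closed_set P W ty rep S"
    unfolding S_eq
    by (rule closed_set_coalition_states[OF assms(1,4,5) less_imp_le[OF alpha_w_pos]])
      (use assms(6) in \<open>simp add: less_imp_le\<close>)
  moreover have "untruthful_set W rep S"
    unfolding S_eq by (rule untruthful_set_coalition_states[OF assms(1,4,5)])
  moreover have "reachable P W ty rep s0 S"
    if "valid_init P W ty s0" "pA s0 = 0" "rhoSet rep s0 Z > rhoSet rep s0 (W - Z)"
      "\<forall>i\<in>Z. pC s0 i > 0" for s0
    unfolding S_eq using that
    by (intro coalition_states_reachable[OF assms(1,4,5) alpha_w_pos assms(6)])
      (simp_all add: reputable_def)
  ultimately show ?thesis
    by blast
qed

end
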